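(* Let $\mathbb{F}$ be a field and $n\in\{2,3,4\}$. For every integer $l$ with $1\le l\le 2^{n-2}$ there exists a unital $\mathbb{F}$-algebra $\mathcal{A}$ with $\dim\mathcal{A}=n$ and $l(\mathcal{A})=l$.
   Context: Algebras are finite-dimensional, unital, not necessarily associative. For a finite generating set $S$ of $\mathcal{A}$, a word in $S$ is any product (with any bracketing) of finitely many elements of $S$; its length is the number of factors, and $1$ is a word of length $0$. $L_i(S)$ is the linear span of all words in $S$ of length at most $i$. The length of $S$ is $l(S)=\min\{k\ge0: L_k(S)=\mathcal{A}\}$, and $l(\mathcal{A})=\max\{l(S): S\text{ a finite generating set of }\mathcal{A}\}$. *)

theory Defs
  imports Main
begin

text \<open>An n-dimensional (not necessarily associative) algebra over a field 'a is
modelled, up to isomorphism, as the coordinate space F^n (vectors nat => 'a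
vanishing outside {0..<n}) with a bilinear multiplication given by structure
constants c i j k (e_i * e_j = sum_k c i j k e_k).\<close>

type_synonym 'a vect = "nat \<Rightarrow> 'a"

definition vecs :: "nat \<Rightarrow> ('a::zero) vect set" where
  "vecs n = {v. \<forall>i\<ge>n. v i = 0}"

definition amult :: "(nat \<Rightarrow> nat \<Rightarrow> nat \<Rightarrow> 'a::field) \<Rightarrow> nat \<Rightarrow> 'a vect \<Rightarrow> 'a vect \<Rightarrow> 'a vect" where
  "amult c n x y = (\<lambda>k. if k < n then (\<Sum>i<n. \<Sum>j<n. x i * y j * c i j k) else 0)"

definition is_unit :: "(nat \<Rightarrow> nat \<Rightarrow> nat \<Rightarrow> 'a::field) \<Rightarrow> nat \<Rightarrow> 'a vect \<Rightarrow> bool" where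
  "is_unit c n u \<longleftrightarrow> u \<in> vecs n \<and> (\<forall>x\<in>vecs n. amult c n u x = x \<and> amult c n x u = x)"

definition unital_alg :: "(nat \<Rightarrow> nat \<Rightarrow> nat \<Rightarrow> 'a::field) \<Rightarrow> nat \<Rightarrow> bool" where
  "unital_alg c n \<longleftrightarrow> (\<exists>u. is_unit c n u)"

definition aone :: "(nat \<Rightarrow> nat \<Rightarrow> nat \<Rightarrow> 'a::field) \<Rightarrow> nat \<Rightarrow> 'a vect" where
  "aone c n = (SOME u. is_unit c n u)"

definition lspan :: "('a::field) vect set \<Rightarrow> 'a vect set" where
  "lspan S = {x. \<exists>T f. finite T \<and> T \<subseteq> S \<and> x = (\<lambda>k. \<Sum>v\<in>T. f v * v k)}"

inductive word :: "(nat \<Rightarrow> nat \<Rightarrow> nat \<Rightarrow> 'a::field) \<Rightarrow> nat \<Rightarrow> 'a vect set \<Rightarrow> nat \<Rightarrow> 'a vect \<Rightarrow> bool"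
  for c n S where
  word_one: "word c n S 0 (aone c n)"
| word_gen: "s \<in> S \<Longrightarrow> word c n S 1 s"
| word_mult: "word c n S i x \<Longrightarrow> word c n S j y \<Longrightarrow> word c n S (i + j) (amult c n x y)"

definition Lsp :: "(nat \<Rightarrow> nat \<Rightarrow> nat \<Rightarrow> 'a::field) \<Rightarrow> nat \<Rightarrow> 'a vect set \<Rightarrow> nat \<Rightarrow> 'a vect set" where
  "Lsp c n S i = lspan {x. \<exists>j\<le>i. word c n S j x}"

definition generating :: "(nat \<Rightarrow> nat \<Rightarrow> nat \<Rightarrow> 'a::field) \<Rightarrow> nat \<Rightarrow> 'a vect set \<Rightarrow> bool" where
  "generating c n S \<longleftrightarrow> finite S \<and> S \<subseteq> vecs n \<and> (\<exists>k. Lsp c n S k = vecs n)"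

definition set_length :: "(nat \<Rightarrow> nat \<Rightarrow> nat \<Rightarrow> 'a::field) \<Rightarrow> nat \<Rightarrow> 'a vect set \<Rightarrow> nat" where
  "set_length c n S = (LEAST k. Lsp c n S k = vecs n)"

definition alg_length :: "(nat \<Rightarrow> nat \<Rightarrow> nat \<Rightarrow> 'a::field) \<Rightarrow> nat \<Rightarrow> nat \<Rightarrow> bool" where
  "alg_length c n l \<longleftrightarrow> (\<exists>S. generating c n S \<and> set_length c n S = l)
      \<and> (\<forall>S. generating c n S \<longrightarrow> set_length c n S \<le> l)"

end

theory Submission
  imports Defs "HOL-Library.Function_Algebras" "HOL.Vector_Spaces"
begin

text \<open>
  All examples are unitizations \<open>F\<cdot>1 \<oplus> N\<close> of a nilpotent algebra \<open>N\<close>; the unit is the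
  basis vector \<open>e\<^sub>0\<close> and \<open>N\<close> has basis \<open>e\<^sub>1, \<dots>, e\<^bsub>n-1\<^esub>\<close>. The products are
  \<open>N\<^sup>2 = 0\<close> (length 1), \<open>e\<^sub>1\<^sup>2 = e\<^sub>2\<close> (length 2), \<open>e\<^sub>1\<^sup>2 = e\<^sub>2, e\<^sub>1e\<^sub>2 = e\<^sub>3\<close> (length 3)
  and \<open>e\<^sub>1\<^sup>2 = e\<^sub>2, e\<^sub>2\<^sup>2 = e\<^sub>3\<close> (length 4).

  Lower bounds come from a weight \<open>w\<close> on the basis with \<open>w(e\<^sub>k) \<le> w(e\<^sub>a) + w(e\<^sub>b)\<close> whenever
  \<open>e\<^sub>k\<close> occurs in \<open>e\<^sub>ae\<^sub>b\<close>: a word of length \<open>j\<close> in generators of weight one only involves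
  basis vectors of weight at most \<open>j\<close>, so the set of all weight-one basis vectors generates
  with length at least the largest weight.

  Upper bounds: \<open>e\<^sub>1\<close> occurs in no product \<open>e\<^sub>ae\<^sub>b\<close> with \<open>a, b \<ge> 1\<close>, so every generating
  set contains some \<open>s\<close> with \<open>s\<^sub>1 \<noteq> 0\<close>. Products of its radical part \<open>s - s\<^sub>0e\<^sub>0\<close> put every
  basis vector occurring in such a product \<open>e\<^sub>ae\<^sub>b\<close> into \<open>L\<^sub>l\<close>. Then \<open>L\<^sub>l\<close> is closed under
  multiplication, so it contains all words and is the whole algebra.
\<close>

definition scale_vect :: "'a::field \<Rightarrow> 'a vect \<Rightarrow> 'a vect" (infixr \<open>*\<^sub>v\<close> 75)
  where "c *\<^sub>v v = (\<lambda>k. c * v k)"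

lemma scale_vect_apply [simp]: "(c *\<^sub>v v) k = c * v k"
  by (simp add: scale_vect_def)

interpretation vect: vector_space scale_vect
  by unfold_locales (auto simp: fun_eq_iff algebra_simps)

lemma sum_vect_apply: "(\<Sum>a\<in>A. f a) k = (\<Sum>a\<in>A. f a k)"
  for f :: "'b \<Rightarrow> 'a::comm_monoid_add vect"
  by (induction A rule: infinite_finite_induct) auto

lemma lspan_eq_span: "lspan S = vect.span S"
  unfolding lspan_def vect.span_explicit by (auto simp: sum_vect_apply fun_eq_iff)

lemma subspace_scale_cancel:
  assumes "vect.subspace V" "c *\<^sub>v u \<in> V" "c \<noteq> 0"
  shows "u \<in> V"
proof -
  have "(1 / c) *\<^sub>v (c *\<^sub>v u) \<in> V"
    using assms(1,2) by (rule vect.subspace_scale)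
  then show ?thesis
    using assms(3) by (simp add: scale_vect_def)
qed

definition basis_vect :: "nat \<Rightarrow> 'a::field vect" where
  "basis_vect t = (\<lambda>k. if k = t then 1 else 0)"

lemma basis_vect_in_vecs: "t < n \<Longrightarrow> basis_vect t \<in> vecs n"
  unfolding basis_vect_def vecs_def by auto

lemma subspace_vecs: "vect.subspace (vecs n)"
  by (auto simp: vect.subspace_def vecs_def)

lemma span_subset_vecs: "B \<subseteq> vecs n \<Longrightarrow> vect.span B \<subseteq> vecs n"
  by (rule vect.span_minimal[OF _ subspace_vecs])

lemma vect_eq_sum_basis_vect:
  assumes "v \<in> vecs n"
  shows "v = (\<Sum>t<n. v t *\<^sub>v basis_vect t)"
proof
  fix k
  show "v k = (\<Sum>t<n. v t *\<^sub>v basis_vect t) k"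
    using assms
    by (cases "k < n")
      (auto simp: sum_vect_apply basis_vect_def vecs_def if_distrib[of "(*) _"] cong: if_cong)
qed

lemma in_span_if_support_in_span:
  assumes "v \<in> vecs n" and "\<And>t. t < n \<Longrightarrow> v t \<noteq> 0 \<Longrightarrow> basis_vect t \<in> vect.span B"
  shows "v \<in> vect.span B"
proof -
  have "v t *\<^sub>v basis_vect t \<in> vect.span B" if "t < n" for t
    using assms(2)[OF that] vect.span_scale vect.span_zero
    by (cases "v t = 0") (auto simp: zero_fun_def)
  then show ?thesis
    by (subst vect_eq_sum_basis_vect[OF assms(1)]) (auto intro: vect.span_sum)
qed

lemma span_coord_eq_zero:
  assumes "x \<in> vect.span B" and "\<And>v. v \<in> B \<Longrightarrow> v t = 0"
  shows "x t = 0"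
  using assms by (induction rule: vect.span_induct_alt) auto

section \<open>Words and the length filtration\<close>

lemma Lsp_eq_span: "Lsp c n S i = vect.span {x. \<exists>j\<le>i. word c n S j x}"
  unfolding Lsp_def lspan_eq_span ..

lemma subspace_Lsp: "vect.subspace (Lsp c n S i)"
  unfolding Lsp_eq_span by (rule vect.subspace_span)

lemma word_in_Lsp: "word c n S j x \<Longrightarrow> j \<le> i \<Longrightarrow> x \<in> Lsp c n S i"
  unfolding Lsp_eq_span by (auto intro: vect.span_base)

lemma aone_in_Lsp: "aone c n \<in> Lsp c n S i"
  by (rule word_in_Lsp[OF word.word_one]) simp

lemma generator_in_Lsp: "s \<in> S \<Longrightarrow> 0 < i \<Longrightarrow> s \<in> Lsp c n S i"
  by (rule word_in_Lsp[OF word.word_gen]) auto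

lemma Lsp_mono: "i \<le> j \<Longrightarrow> Lsp c n S i \<subseteq> Lsp c n S j"
  unfolding Lsp_eq_span by (rule vect.span_mono) (auto intro: le_trans)

lemma vecs_subset_Lsp:
  "(\<And>t. t < n \<Longrightarrow> basis_vect t \<in> Lsp c n S i) \<Longrightarrow> vecs n \<subseteq> Lsp c n S i"
  unfolding Lsp_eq_span using in_span_if_support_in_span by blast

lemma amult_scale_add_left:
  "amult c n (a *\<^sub>v x + y) z = a *\<^sub>v amult c n x z + amult c n y z"
  by (auto simp: amult_def algebra_simps sum.distrib sum_distrib_left)

lemma amult_scale_add_right:
  "amult c n x (a *\<^sub>v y + z) = a *\<^sub>v amult c n x y + amult c n x z"
  by (auto simp: amult_def algebra_simps sum.distrib sum_distrib_left)

lemma amult_zero_left: "amult c n 0 y = 0"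
  and amult_zero_right: "amult c n x 0 = 0"
  by (auto simp: amult_def)

lemma amult_in_span:
  assumes "x \<in> vect.span A" "y \<in> vect.span B"
    and "\<And>a b. a \<in> A \<Longrightarrow> b \<in> B \<Longrightarrow> amult c n a b \<in> vect.span C"
  shows "amult c n x y \<in> vect.span C"
  using assms(1)
proof (induction rule: vect.span_induct_alt)
  case base
  show ?case
    using vect.span_zero amult_zero_left by metis
next
  case (step a x' x'')
  have "amult c n x' y \<in> vect.span C"
    using assms(2)
  proof (induction rule: vect.span_induct_alt)
    case base
    show ?case
      using vect.span_zero amult_zero_right by metis
  next
    case (step b y' y'')
    then show ?case
      unfolding amult_scale_add_right
      by (intro vect.span_add vect.span_scale assms(3)[OF \<open>x' \<in> A\<close> \<open>y' \<in> B\<close>])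
  qed
  with step.IH show ?case
    unfolding amult_scale_add_left by (intro vect.span_add vect.span_scale)
qed

lemma amult_in_Lsp:
  assumes "x \<in> Lsp c n S i" "y \<in> Lsp c n S j" "i + j \<le> k"
  shows "amult c n x y \<in> Lsp c n S k"
proof -
  have "amult c n x y \<in> Lsp c n S (i + j)"
    using assms(1,2) unfolding Lsp_eq_span
    by (rule amult_in_span) (auto intro!: vect.span_base word_mult add_mono)
  then show ?thesis
    using Lsp_mono[OF assms(3)] by blast
qed

lemma amult_in_vecs: "amult c n x y \<in> vecs n"
  unfolding amult_def vecs_def by auto

lemma amult_basis_vect:
  assumes "a < n" "b < n"
  shows "amult c n (basis_vect a) (basis_vect b) = (\<lambda>k. if k < n then c a b k else 0)"
  using assms unfolding amult_def basis_vect_def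
  by (simp add: sum.swap[of _ "{..<n}"] if_distrib[of "\<lambda>x. x * _"] cong: if_cong)

lemma aone_eq_unit: "is_unit c n u \<Longrightarrow> aone c n = u"
  by (metis aone_def is_unit_def someI)

lemma Lsp_subset_vecs:
  assumes "aone c n \<in> vecs n" "S \<subseteq> vecs n"
  shows "Lsp c n S i \<subseteq> vecs n"
proof -
  have "x \<in> vecs n" if "word c n S j x" for j x
    using that by (induction rule: word.induct) (use assms amult_in_vecs in auto)
  then show ?thesis
    unfolding Lsp_eq_span by (intro span_subset_vecs) auto
qed

lemma generatingI:
  assumes "finite S" "S \<subseteq> vecs n" "aone c n \<in> vecs n" "vecs n \<subseteq> Lsp c n S k"
  shows "generating c n S"
  using assms Lsp_subset_vecs unfolding generating_def by blast

lemma Lsp_eq_vecs_if_mult_closed: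
  assumes gen: "generating c n S" and "aone c n \<in> vecs n" "0 < i"
    and closed: "\<And>x y. x \<in> Lsp c n S i \<Longrightarrow> y \<in> Lsp c n S i \<Longrightarrow> amult c n x y \<in> Lsp c n S i"
  shows "Lsp c n S i = vecs n"
proof -
  obtain k where k: "Lsp c n S k = vecs n"
    using gen unfolding generating_def by blast
  have "x \<in> Lsp c n S i" if "word c n S j x" for j x
    using that
  proof (induction rule: word.induct)
    case word_one
    show ?case
      by (rule aone_in_Lsp)
  next
    case (word_gen s)
    then show ?case
      using \<open>0 < i\<close> by (rule generator_in_Lsp)
  qed (rule closed)
  then have "Lsp c n S k \<subseteq> Lsp c n S i"
    unfolding Lsp_eq_span[of c n S k] by (intro vect.span_minimal) (auto simp: Lsp_eq_span)
  then show ?thesis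
    using k Lsp_subset_vecs assms(2) gen unfolding generating_def by blast
qed

lemma alg_length_intro:
  assumes "generating c n S0" and "\<And>k. k < l \<Longrightarrow> Lsp c n S0 k \<noteq> vecs n"
    and "\<And>S. generating c n S \<Longrightarrow> Lsp c n S l = vecs n"
  shows "alg_length c n l"
proof -
  have "set_length c n S0 = l"
    unfolding set_length_def using assms by (intro Least_equality) (auto simp: not_less[symmetric])
  moreover have "set_length c n S \<le> l" if "generating c n S" for S
    unfolding set_length_def using assms(3)[OF that] by (rule Least_le)
  ultimately show ?thesis
    unfolding alg_length_def using assms(1) by blast
qed

section \<open>Weights and lower bounds for the length\<close>

definition compatible_weight :: "(nat \<Rightarrow> nat \<Rightarrow> nat \<Rightarrow> 'a::zero) \<Rightarrow> nat \<Rightarrow> (nat \<Rightarrow> nat) \<Rightarrow> bool"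
  where "compatible_weight c n w \<longleftrightarrow> (\<forall>a<n. \<forall>b<n. \<forall>k<n. c a b k \<noteq> 0 \<longrightarrow> w k \<le> w a + w b)"

definition weight_le :: "(nat \<Rightarrow> nat) \<Rightarrow> nat \<Rightarrow> 'a::zero vect \<Rightarrow> bool" where
  "weight_le w i x \<longleftrightarrow> (\<forall>k. i < w k \<longrightarrow> x k = 0)"

lemma weight_le_basis_vect [simp]: "weight_le w i (basis_vect t) \<longleftrightarrow> w t \<le> i"
  unfolding weight_le_def basis_vect_def by (auto simp: not_less)

lemma weight_le_amult:
  assumes "compatible_weight c n w" "weight_le w i x" "weight_le w j y"
  shows "weight_le w (i + j) (amult c n x y)"
  unfolding weight_le_def
proof (intro allI impI)
  fix k
  assume "i + j < w k"
  have "x a * y b * c a b k = 0" if "a < n" "b < n" "k < n" for a b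
  proof (rule ccontr)
    assume "x a * y b * c a b k \<noteq> 0"
    then have "w a \<le> i" "w b \<le> j" "w k \<le> w a + w b"
      using assms that unfolding compatible_weight_def weight_le_def
      by (auto simp: not_less[symmetric])
    with \<open>i + j < w k\<close> show False
      by linarith
  qed
  then show "amult c n x y k = 0"
    by (auto simp: amult_def intro!: sum.neutral)
qed

lemma weight_le_word:
  assumes "compatible_weight c n w" "weight_le w 0 (aone c n)" "\<forall>s\<in>S. weight_le w 1 s"
    and "word c n S j x"
  shows "weight_le w j x"
  using assms(4) by (induction rule: word.induct) (use assms weight_le_amult in auto)

lemma Lsp_ne_vecs_below_weight:
  assumes "compatible_weight c n w" "weight_le w 0 (aone c n)" "\<forall>s\<in>S. weight_le w 1 s"
    and "t < n" "i < w t"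
  shows "Lsp c n S i \<noteq> vecs n"
proof
  assume "Lsp c n S i = vecs n"
  then have "basis_vect t \<in> Lsp c n S i"
    using basis_vect_in_vecs[OF \<open>t < n\<close>] by simp
  moreover have "x t = 0" if "x \<in> {x. \<exists>j\<le>i. word c n S j x}" for x
  proof -
    from that obtain j where "j \<le> i" "word c n S j x"
      by auto
    then have "weight_le w j x"
      by (intro weight_le_word[OF assms(1-3)])
    with \<open>j \<le> i\<close> \<open>i < w t\<close> show ?thesis
      unfolding weight_le_def by simp
  qed
  ultimately have "basis_vect t t = (0::'a)"
    unfolding Lsp_eq_span by (rule span_coord_eq_zero)
  then show False
    by (simp add: basis_vect_def)
qed

lemma generating_ex_coord_ne_zero:
  assumes gen: "generating c n S" and "t < n" "aone c n t = 0"
    and "\<And>a b. a < n \<Longrightarrow> b < n \<Longrightarrow> c a b t \<noteq> 0 \<Longrightarrow> a = t \<or> b = t"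
  shows "\<exists>s\<in>S. s t \<noteq> 0"
proof (rule ccontr)
  assume none: "\<not> (\<exists>s\<in>S. s t \<noteq> 0)"
  obtain k where "Lsp c n S k = vecs n"
    using gen unfolding generating_def by blast
  \<comment> \<open>Only generators contribute to \<open>e\<^sub>t\<close>, so making \<open>e\<^sub>t\<close> heavier than \<open>k\<close> is compatible.\<close>
  moreover have "Lsp c n S k \<noteq> vecs n"
    by (rule Lsp_ne_vecs_below_weight[where w = "\<lambda>k'. if k' = t then Suc k else 0"])
      (use assms none in \<open>auto simp: compatible_weight_def weight_le_def\<close>)
  ultimately show False
    by simp
qed

section \<open>Unitizations\<close>

definition unitization :: "(nat \<Rightarrow> nat \<Rightarrow> nat \<Rightarrow> 'a) \<Rightarrow> nat \<Rightarrow> nat \<Rightarrow> nat \<Rightarrow> 'a::field" where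
  "unitization m a b k =
    (if a = 0 then (if b = k then 1 else 0)
     else if b = 0 then (if a = k then 1 else 0)
     else m a b k)"

lemma amult_unitization:
  assumes "k < n"
  shows "amult (unitization m) n x y k =
    x 0 * y k + x k * y 0 - (if k = 0 then x 0 * y 0 else 0)
      + (\<Sum>a\<in>{1..<n}. \<Sum>b\<in>{1..<n}. x a * y b * m a b k)"
proof -
  have "{..<n} = insert 0 {1..<n}"
    using assms by auto
  then show ?thesis
    using assms
    by (simp add: amult_def unitization_def sum.distrib if_distrib[of "\<lambda>z. _ * z"] cong: if_cong)
qed

lemma amult_unitization_radical:
  assumes "x 0 = 0" "y 0 = 0"
  shows "amult (unitization m) n x y =
    (\<lambda>k. if k < n then \<Sum>a\<in>{1..<n}. \<Sum>b\<in>{1..<n}. x a * y b * m a b k else 0)"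
proof
  fix k
  show "amult (unitization m) n x y k =
    (if k < n then \<Sum>a\<in>{1..<n}. \<Sum>b\<in>{1..<n}. x a * y b * m a b k else 0)"
    using assms by (cases "k < n") (simp_all add: amult_unitization, simp add: amult_def)
qed

lemma is_unit_unitization:
  assumes "0 < n"
  shows "is_unit (unitization m) n (basis_vect 0)"
  unfolding is_unit_def
proof (intro conjI ballI)
  show "basis_vect 0 \<in> vecs n"
    using assms by (rule basis_vect_in_vecs)
  fix x :: "'a vect"
  assume x: "x \<in> vecs n"
  have "amult (unitization m) n (basis_vect 0) x k = x k
      \<and> amult (unitization m) n x (basis_vect 0) k = x k" for k
  proof (cases "k < n")
    case True
    then show ?thesis
      by (simp add: amult_unitization basis_vect_def)
  next
    case False
    then show ?thesis
      using x by (simp add: amult_def vecs_def)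
  qed
  then show "amult (unitization m) n (basis_vect 0) x = x"
    and "amult (unitization m) n x (basis_vect 0) = x"
    by auto
qed

lemma aone_unitization: "0 < n \<Longrightarrow> aone (unitization m) n = basis_vect 0"
  by (rule aone_eq_unit[OF is_unit_unitization])

lemma unital_alg_unitization: "0 < n \<Longrightarrow> unital_alg (unitization m) n"
  unfolding unital_alg_def using is_unit_unitization by blast

definition radical_part :: "'a::field vect \<Rightarrow> 'a vect" where
  "radical_part x = x - x 0 *\<^sub>v basis_vect 0"

lemma radical_part_apply [simp]: "radical_part x k = (if k = 0 then 0 else x k)"
  by (simp add: radical_part_def basis_vect_def)

lemma radical_part_in_Lsp:
  "0 < n \<Longrightarrow> x \<in> Lsp (unitization m) n S i \<Longrightarrow> radical_part x \<in> Lsp (unitization m) n S i"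
  unfolding radical_part_def using aone_in_Lsp[of "unitization m" n S i]
  by (intro vect.subspace_diff[OF subspace_Lsp] vect.subspace_scale[OF subspace_Lsp])
    (simp_all add: aone_unitization)

lemma radical_part_in_span:
  assumes "x \<in> vecs n"
  shows "radical_part x \<in> vect.span (basis_vect ` {1..<n})"
proof (rule in_span_if_support_in_span)
  show "radical_part x \<in> vecs n"
    using assms by (simp add: vecs_def)
  fix t
  assume "t < n" "radical_part x t \<noteq> 0"
  then show "basis_vect t \<in> vect.span (basis_vect ` {1..<n})"
    by (intro vect.span_base) (auto split: if_splits)
qed

lemma amult_unitization_split:
  assumes "0 < n" "x \<in> vecs n" "y \<in> vecs n"
  shows "amult (unitization m) n x y
    = x 0 *\<^sub>v y
      + (y 0 *\<^sub>v radical_part x + amult (unitization m) n (radical_part x) (radical_part y))"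
proof -
  let ?c = "unitization m"
  have unit: "amult ?c n (basis_vect 0) v = v" "amult ?c n v (basis_vect 0) = v"
    if "v \<in> vecs n" for v
    using is_unit_unitization[OF assms(1)] that unfolding is_unit_def by auto
  have "radical_part x \<in> vecs n"
    using assms(2) by (simp add: vecs_def)
  have split: "v = v 0 *\<^sub>v basis_vect 0 + radical_part v" for v :: "'a vect"
    by (simp add: radical_part_def)
  have "amult ?c n x y = x 0 *\<^sub>v y + amult ?c n (radical_part x) y"
    by (subst split[of x]) (simp add: amult_scale_add_left unit assms(3))
  also have "amult ?c n (radical_part x) y
      = y 0 *\<^sub>v radical_part x + amult ?c n (radical_part x) (radical_part y)"
    by (subst split[of y]) (simp add: amult_scale_add_right unit \<open>radical_part x \<in> vecs n\<close>)
  finally show ?thesis .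
qed

lemma amult_radical_in_Lsp:
  assumes products: "\<And>a b k. 0 < a \<Longrightarrow> a < n \<Longrightarrow> 0 < b \<Longrightarrow> b < n \<Longrightarrow> k < n \<Longrightarrow> m a b k \<noteq> 0
      \<Longrightarrow> basis_vect k \<in> Lsp (unitization m) n S i"
    and "x \<in> vect.span (basis_vect ` {1..<n})" "y \<in> vect.span (basis_vect ` {1..<n})"
  shows "amult (unitization m) n x y \<in> Lsp (unitization m) n S i"
  using assms(2,3) unfolding Lsp_eq_span
proof (rule amult_in_span)
  fix u v :: "'a vect"
  assume "u \<in> basis_vect ` {1..<n}" "v \<in> basis_vect ` {1..<n}"
  then obtain a b where "a \<in> {1..<n}" "b \<in> {1..<n}" "u = basis_vect a" "v = basis_vect b"
    by blast
  then have ab: "0 < a" "a < n" "0 < b" "b < n" and uv: "u = basis_vect a" "v = basis_vect b"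
    by auto
  have "amult (unitization m) n u v = (\<lambda>k. if k < n then m a b k else 0)"
    using ab unfolding uv by (auto simp: amult_basis_vect unitization_def)
  also have "\<dots> \<in> vect.span {x. \<exists>j\<le>i. word (unitization m) n S j x}"
  proof (rule in_span_if_support_in_span)
    show "(\<lambda>k. if k < n then m a b k else 0) \<in> vecs n"
      by (simp add: vecs_def)
  qed (use products[OF ab] in \<open>auto simp: Lsp_eq_span\<close>)
  finally show "amult (unitization m) n u v \<in> vect.span {x. \<exists>j\<le>i. word (unitization m) n S j x}" .
qed

lemma Lsp_unitization_eq_vecs:
  assumes gen: "generating (unitization m) n S" and "0 < n" "0 < i"
    and products: "\<And>a b k. 0 < a \<Longrightarrow> a < n \<Longrightarrow> 0 < b \<Longrightarrow> b < n \<Longrightarrow> k < n \<Longrightarrow> m a b k \<noteq> 0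
      \<Longrightarrow> basis_vect k \<in> Lsp (unitization m) n S i"
  shows "Lsp (unitization m) n S i = vecs n"
proof (rule Lsp_eq_vecs_if_mult_closed[OF gen _ \<open>0 < i\<close>])
  let ?L = "Lsp (unitization m) n S i"
  show aone: "aone (unitization m) n \<in> vecs n"
    using \<open>0 < n\<close> by (simp add: aone_unitization basis_vect_in_vecs)
  have L_vecs: "?L \<subseteq> vecs n"
    using gen aone by (intro Lsp_subset_vecs) (auto simp: generating_def)
  fix x y
  assume x: "x \<in> ?L" and y: "y \<in> ?L"
  then have "x \<in> vecs n" "y \<in> vecs n"
    using L_vecs by auto
  have "amult (unitization m) n (radical_part x) (radical_part y) \<in> ?L"
  proof (rule amult_radical_in_Lsp)
    show "basis_vect k \<in> ?L" if "0 < a" "a < n" "0 < b" "b < n" "k < n" "m a b k \<noteq> 0" for a b k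
      using that by (rule products)
  qed (rule radical_part_in_span, fact)+
  then show "amult (unitization m) n x y \<in> ?L"
    unfolding amult_unitization_split[OF \<open>0 < n\<close> \<open>x \<in> vecs n\<close> \<open>y \<in> vecs n\<close>]
    using x y radical_part_in_Lsp[OF \<open>0 < n\<close> x]
    by (intro vect.subspace_add[OF subspace_Lsp] vect.subspace_scale[OF subspace_Lsp])
qed

lemma Lsp_unitization_ne_vecs_below_weight:
  assumes "w 0 = 0" and "\<And>a b k. 0 < a \<Longrightarrow> 0 < b \<Longrightarrow> m a b k \<noteq> 0 \<Longrightarrow> w k \<le> w a + w b"
    and "\<forall>s\<in>S. weight_le w 1 s" "t < n" "i < w t"
  shows "Lsp (unitization m) n S i \<noteq> vecs n"
proof (rule Lsp_ne_vecs_below_weight[where w = w])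
  show "compatible_weight (unitization m) n w"
    using assms(1,2) unfolding compatible_weight_def unitization_def by auto
  show "weight_le w 0 (aone (unitization m) n)"
    using assms(1,4) by (simp add: aone_unitization)
qed (use assms in auto)

lemma generating_unitization_intro:
  assumes "0 < n" "finite S" "S \<subseteq> vecs n"
    and "\<And>t. 0 < t \<Longrightarrow> t < n \<Longrightarrow> basis_vect t \<in> Lsp (unitization m) n S k"
  shows "generating (unitization m) n S"
proof (rule generatingI)
  show "aone (unitization m) n \<in> vecs n"
    using assms(1) by (simp add: aone_unitization basis_vect_in_vecs)
  show "vecs n \<subseteq> Lsp (unitization m) n S k"
  proof (rule vecs_subset_Lsp)
    fix t
    assume "t < n"
    then show "basis_vect t \<in> Lsp (unitization m) n S k"
      using assms(1,4) aone_in_Lsp[of "unitization m" n S k]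
      by (cases "t = 0") (auto simp: aone_unitization)
  qed
qed (use assms in auto)

lemma generating_unitization_obtains_radical:
  assumes gen: "generating (unitization m) n S" and "1 < n" and "\<And>a b. m a b 1 = 0"
  obtains r where "r \<in> Lsp (unitization m) n S 1" "r 0 = 0" "r 1 \<noteq> 0"
proof -
  have "\<exists>s\<in>S. s 1 \<noteq> 0"
    using assms by (intro generating_ex_coord_ne_zero)
      (auto simp: aone_unitization basis_vect_def unitization_def split: if_splits)
  then obtain s where "s \<in> S" "s 1 \<noteq> 0"
    by blast
  with \<open>1 < n\<close> show thesis
    by (intro that[of "radical_part s"] radical_part_in_Lsp generator_in_Lsp) auto
qed

section \<open>The examples\<close>

lemma alg_length_unitization_zero_product:
  assumes "2 \<le> n"
  shows "alg_length (unitization (\<lambda>_ _ _. 0) :: nat \<Rightarrow> nat \<Rightarrow> nat \<Rightarrow> 'a::field) n 1"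
proof (rule alg_length_intro)
  let ?c = "unitization (\<lambda>_ _ _. 0) :: nat \<Rightarrow> nat \<Rightarrow> nat \<Rightarrow> 'a"
  let ?S0 = "basis_vect ` {1..<n} :: 'a vect set"
  show "generating ?c n ?S0"
    using assms by (intro generating_unitization_intro[where k = 1])
      (auto intro: generator_in_Lsp basis_vect_in_vecs)
  show "Lsp ?c n ?S0 k \<noteq> vecs n" if "k < 1" for k
    by (rule Lsp_unitization_ne_vecs_below_weight[where w = "\<lambda>k. if k = 0 then 0 else 1" and t = 1])
      (use that assms in auto)
  show "Lsp ?c n S 1 = vecs n" if "generating ?c n S" for S
    using that assms by (intro Lsp_unitization_eq_vecs) auto
qed

definition square_e1_table :: "nat \<Rightarrow> nat \<Rightarrow> nat \<Rightarrow> 'a::field" where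
  "square_e1_table a b k = (if a = 1 \<and> b = 1 \<and> k = 2 then 1 else 0)"

lemma amult_square_e1:
  fixes x y :: "'a::field vect"
  assumes "3 \<le> n" "x 0 = 0" "y 0 = 0"
  shows "amult (unitization square_e1_table) n x y = (x 1 * y 1) *\<^sub>v basis_vect 2"
proof -
  have "(\<Sum>b\<in>{1..<n}. x a * y b * square_e1_table a b k) = (if a = 1 \<and> k = 2 then x 1 * y 1 else 0)"
    for a k
    using assms by (auto simp: square_e1_table_def if_distrib[of "\<lambda>z. _ * z"] cong: if_cong)
  then show ?thesis
    using assms by (auto simp: amult_unitization_radical sum.delta basis_vect_def fun_eq_iff)
qed

lemma Lsp_square_e1_eq_vecs:
  assumes gen: "generating (unitization square_e1_table) n S" and "3 \<le> n"
  shows "Lsp (unitization square_e1_table) n S 2 = vecs n"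
proof -
  let ?c = "unitization square_e1_table" and ?L = "Lsp (unitization square_e1_table) n S 2"
  obtain r where r: "r \<in> Lsp ?c n S 1" "r 0 = 0" "r 1 \<noteq> 0"
    using generating_unitization_obtains_radical[OF gen] assms(2)
    by (auto simp: square_e1_table_def)
  have "amult ?c n r r \<in> ?L"
    by (rule amult_in_Lsp[OF r(1) r(1)]) simp
  then have "(r 1 * r 1) *\<^sub>v basis_vect 2 \<in> ?L"
    using r assms(2) by (simp add: amult_square_e1)
  then have "basis_vect 2 \<in> ?L"
    by (rule subspace_scale_cancel[OF subspace_Lsp]) (use r in simp)
  then show ?thesis
    using gen assms(2)
    by (intro Lsp_unitization_eq_vecs) (auto simp: square_e1_table_def split: if_splits)
qed

lemma alg_length_unitization_square_e1:
  assumes "3 \<le> n"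
  shows "alg_length (unitization square_e1_table :: nat \<Rightarrow> nat \<Rightarrow> nat \<Rightarrow> 'a::field) n 2"
proof (rule alg_length_intro)
  let ?c = "unitization square_e1_table :: nat \<Rightarrow> nat \<Rightarrow> nat \<Rightarrow> 'a"
  let ?S0 = "basis_vect ` ({1..<n} - {2}) :: 'a vect set"
  show "generating ?c n ?S0"
  proof (rule generating_unitization_intro[where k = 2])
    have e1: "basis_vect 1 \<in> Lsp ?c n ?S0 1"
      using assms by (intro generator_in_Lsp) auto
    have "amult ?c n (basis_vect 1) (basis_vect 1) \<in> Lsp ?c n ?S0 2"
      by (rule amult_in_Lsp[OF e1 e1]) simp
    then have "basis_vect 2 \<in> Lsp ?c n ?S0 2"
      using assms by (simp add: amult_square_e1 basis_vect_def)
    then show "basis_vect t \<in> Lsp ?c n ?S0 2" if "0 < t" "t < n" for t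
      using that by (cases "t = 2") (auto intro: generator_in_Lsp)
  qed (use assms in \<open>auto intro: basis_vect_in_vecs\<close>)
  show "Lsp ?c n ?S0 k \<noteq> vecs n" if "k < 2" for k
    by (rule Lsp_unitization_ne_vecs_below_weight
        [where w = "\<lambda>k. if k = 0 then 0 else if k = 2 then 2 else 1" and t = 2])
      (use that assms in \<open>auto simp: square_e1_table_def\<close>)
  show "Lsp ?c n S 2 = vecs n" if "generating ?c n S" for S
    using that assms by (rule Lsp_square_e1_eq_vecs)
qed

definition left_powers_table :: "nat \<Rightarrow> nat \<Rightarrow> nat \<Rightarrow> 'a::field" where
  "left_powers_table a b k = (if (a = 1 \<and> b = 1 \<and> k = 2) \<or> (a = 1 \<and> b = 2 \<and> k = 3) then 1 else 0)"

lemma amult_left_powers: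
  fixes x y :: "'a::field vect"
  assumes "x 0 = 0" "y 0 = 0"
  shows "amult (unitization left_powers_table) 4 x y
    = (x 1 * y 1) *\<^sub>v basis_vect 2 + (x 1 * y 2) *\<^sub>v basis_vect 3"
  using assms
  by (auto simp: amult_unitization_radical left_powers_table_def basis_vect_def fun_eq_iff
      eval_nat_numeral atLeastLessThanSuc)

lemma Lsp_left_powers_eq_vecs:
  assumes gen: "generating (unitization left_powers_table) 4 S"
  shows "Lsp (unitization left_powers_table) 4 S 3 = vecs 4"
proof -
  let ?c = "unitization left_powers_table" and ?L = "Lsp (unitization left_powers_table) 4 S 3"
  obtain r where r: "r \<in> Lsp ?c 4 S 1" "r 0 = 0" "r 1 \<noteq> 0"
    using generating_unitization_obtains_radical[OF gen] by (auto simp: left_powers_table_def)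
  define p where "p = amult ?c 4 r r"
  have p: "p = (r 1 * r 1) *\<^sub>v basis_vect 2 + (r 1 * r 2) *\<^sub>v basis_vect 3"
    unfolding p_def using r by (simp add: amult_left_powers)
  have p2: "p \<in> Lsp ?c 4 S 2" and p3: "p \<in> ?L"
    unfolding p_def by (rule amult_in_Lsp[OF r(1) r(1)], simp)+
  have "amult ?c 4 r p \<in> ?L"
    by (rule amult_in_Lsp[OF r(1) p2]) simp
  then have "(r 1 * (r 1 * r 1)) *\<^sub>v basis_vect 3 \<in> ?L"
    using r by (simp add: amult_left_powers p basis_vect_def)
  then have e3: "basis_vect 3 \<in> ?L"
    by (rule subspace_scale_cancel[OF subspace_Lsp]) (use r in simp)
  have "p - (r 1 * r 2) *\<^sub>v basis_vect 3 \<in> ?L"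
    using p3 e3 by (intro vect.subspace_diff[OF subspace_Lsp] vect.subspace_scale[OF subspace_Lsp])
  then have "(r 1 * r 1) *\<^sub>v basis_vect 2 \<in> ?L"
    by (simp add: p)
  then have "basis_vect 2 \<in> ?L"
    by (rule subspace_scale_cancel[OF subspace_Lsp]) (use r in simp)
  with e3 show ?thesis
    using gen by (intro Lsp_unitization_eq_vecs) (auto simp: left_powers_table_def split: if_splits)
qed

lemma alg_length_unitization_left_powers:
  "alg_length (unitization left_powers_table :: nat \<Rightarrow> nat \<Rightarrow> nat \<Rightarrow> 'a::field) 4 3"
proof (rule alg_length_intro)
  let ?c = "unitization left_powers_table :: nat \<Rightarrow> nat \<Rightarrow> nat \<Rightarrow> 'a"
  let ?S0 = "{basis_vect 1} :: 'a vect set"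
  show "generating ?c 4 ?S0"
  proof (rule generating_unitization_intro[where k = 3])
    have e1: "basis_vect 1 \<in> Lsp ?c 4 ?S0 1"
      by (intro generator_in_Lsp) auto
    have "amult ?c 4 (basis_vect 1) (basis_vect 1) \<in> Lsp ?c 4 ?S0 2"
      by (rule amult_in_Lsp[OF e1 e1]) simp
    then have e2: "basis_vect 2 \<in> Lsp ?c 4 ?S0 2"
      by (simp add: amult_left_powers basis_vect_def)
    have "amult ?c 4 (basis_vect 1) (basis_vect 2) \<in> Lsp ?c 4 ?S0 3"
      by (rule amult_in_Lsp[OF e1 e2]) simp
    then have e3: "basis_vect 3 \<in> Lsp ?c 4 ?S0 3"
      by (simp add: amult_left_powers basis_vect_def)
    show "basis_vect t \<in> Lsp ?c 4 ?S0 3" if "0 < t" "t < 4" for t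
      using that e1 e2 e3 Lsp_mono[of 1 3 ?c 4 ?S0] Lsp_mono[of 2 3 ?c 4 ?S0]
      by (auto simp: eval_nat_numeral less_Suc_eq)
  qed (auto intro: basis_vect_in_vecs)
  show "Lsp ?c 4 ?S0 k \<noteq> vecs 4" if "k < 3" for k
    by (rule Lsp_unitization_ne_vecs_below_weight[where w = id and t = 3])
      (use that in \<open>auto simp: left_powers_table_def split: if_splits\<close>)
  show "Lsp ?c 4 S 3 = vecs 4" if "generating ?c 4 S" for S
    using that by (rule Lsp_left_powers_eq_vecs)
qed

definition iterated_squares_table :: "nat \<Rightarrow> nat \<Rightarrow> nat \<Rightarrow> 'a::field" where
  "iterated_squares_table a b k =
    (if (a = 1 \<and> b = 1 \<and> k = 2) \<or> (a = 2 \<and> b = 2 \<and> k = 3) then 1 else 0)"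

lemma amult_iterated_squares:
  fixes x y :: "'a::field vect"
  assumes "x 0 = 0" "y 0 = 0"
  shows "amult (unitization iterated_squares_table) 4 x y
    = (x 1 * y 1) *\<^sub>v basis_vect 2 + (x 2 * y 2) *\<^sub>v basis_vect 3"
  using assms
  by (auto simp: amult_unitization_radical iterated_squares_table_def basis_vect_def fun_eq_iff
      eval_nat_numeral atLeastLessThanSuc)

lemma Lsp_iterated_squares_eq_vecs:
  assumes gen: "generating (unitization iterated_squares_table) 4 S"
  shows "Lsp (unitization iterated_squares_table) 4 S 4 = vecs 4"
proof -
  let ?c = "unitization iterated_squares_table"
  let ?L = "Lsp (unitization iterated_squares_table) 4 S 4"
  obtain r where r: "r \<in> Lsp ?c 4 S 1" "r 0 = 0" "r 1 \<noteq> 0"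
    using generating_unitization_obtains_radical[OF gen] by (auto simp: iterated_squares_table_def)
  define p where "p = amult ?c 4 r r"
  have p: "p = (r 1 * r 1) *\<^sub>v basis_vect 2 + (r 2 * r 2) *\<^sub>v basis_vect 3"
    unfolding p_def using r by (simp add: amult_iterated_squares)
  have p2: "p \<in> Lsp ?c 4 S 2" and p4: "p \<in> ?L"
    unfolding p_def by (rule amult_in_Lsp[OF r(1) r(1)], simp)+
  have "amult ?c 4 p p \<in> ?L"
    by (rule amult_in_Lsp[OF p2 p2]) simp
  then have "((r 1 * r 1) * (r 1 * r 1)) *\<^sub>v basis_vect 3 \<in> ?L"
    using r by (simp add: amult_iterated_squares p basis_vect_def)
  then have e3: "basis_vect 3 \<in> ?L"
    by (rule subspace_scale_cancel[OF subspace_Lsp]) (use r in simp)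
  have "p - (r 2 * r 2) *\<^sub>v basis_vect 3 \<in> ?L"
    using p4 e3 by (intro vect.subspace_diff[OF subspace_Lsp] vect.subspace_scale[OF subspace_Lsp])
  then have "(r 1 * r 1) *\<^sub>v basis_vect 2 \<in> ?L"
    by (simp add: p)
  then have "basis_vect 2 \<in> ?L"
    by (rule subspace_scale_cancel[OF subspace_Lsp]) (use r in simp)
  with e3 show ?thesis
    using gen
    by (intro Lsp_unitization_eq_vecs) (auto simp: iterated_squares_table_def split: if_splits)
qed

lemma alg_length_unitization_iterated_squares:
  "alg_length (unitization iterated_squares_table :: nat \<Rightarrow> nat \<Rightarrow> nat \<Rightarrow> 'a::field) 4 4"
proof (rule alg_length_intro)
  let ?c = "unitization iterated_squares_table :: nat \<Rightarrow> nat \<Rightarrow> nat \<Rightarrow> 'a"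
  let ?S0 = "{basis_vect 1} :: 'a vect set"
  show "generating ?c 4 ?S0"
  proof (rule generating_unitization_intro[where k = 4])
    have e1: "basis_vect 1 \<in> Lsp ?c 4 ?S0 1"
      by (intro generator_in_Lsp) auto
    have "amult ?c 4 (basis_vect 1) (basis_vect 1) \<in> Lsp ?c 4 ?S0 2"
      by (rule amult_in_Lsp[OF e1 e1]) simp
    then have e2: "basis_vect 2 \<in> Lsp ?c 4 ?S0 2"
      by (simp add: amult_iterated_squares basis_vect_def)
    have "amult ?c 4 (basis_vect 2) (basis_vect 2) \<in> Lsp ?c 4 ?S0 4"
      by (rule amult_in_Lsp[OF e2 e2]) simp
    then have e3: "basis_vect 3 \<in> Lsp ?c 4 ?S0 4"
      by (simp add: amult_iterated_squares basis_vect_def)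
    show "basis_vect t \<in> Lsp ?c 4 ?S0 4" if "0 < t" "t < 4" for t
      using that e1 e2 e3 Lsp_mono[of 1 4 ?c 4 ?S0] Lsp_mono[of 2 4 ?c 4 ?S0]
      by (auto simp: eval_nat_numeral less_Suc_eq)
  qed (auto intro: basis_vect_in_vecs)
  show "Lsp ?c 4 ?S0 k \<noteq> vecs 4" if "k < 4" for k
    by (rule Lsp_unitization_ne_vecs_below_weight
        [where w = "\<lambda>k. if k = 0 then 0 else 2 ^ (k - 1)" and t = 3])
      (use that in \<open>auto simp: iterated_squares_table_def split: if_splits\<close>)
  show "Lsp ?c 4 S 4 = vecs 4" if "generating ?c 4 S" for S
    using that by (rule Lsp_iterated_squares_eq_vecs)
qed

theorem proposition3p7:
  fixes n l :: nat
  assumes "n \<in> {2, 3, 4}" and "1 \<le> l" and "l \<le> 2 ^ (n - 2)"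
  shows "\<exists>c :: nat \<Rightarrow> nat \<Rightarrow> nat \<Rightarrow> 'a::field. unital_alg c n \<and> alg_length c n l"
proof -
  have "(l = 1 \<and> 2 \<le> n) \<or> (l = 2 \<and> 3 \<le> n) \<or> (n = 4 \<and> l = 3) \<or> (n = 4 \<and> l = 4)"
    using assms by auto
  then obtain m :: "nat \<Rightarrow> nat \<Rightarrow> nat \<Rightarrow> 'a" where "alg_length (unitization m) n l"
    using alg_length_unitization_zero_product alg_length_unitization_square_e1
      alg_length_unitization_left_powers alg_length_unitization_iterated_squares
    by (elim disjE conjE) (simp_all, blast+)
  moreover have "unital_alg (unitization m) n"
    using assms(1) by (intro unital_alg_unitization) auto
  ultimately show ?thesis
    by blast
qed

end
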